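(* Let $h>0$, $n\in\mathbb{N}$, and let $\lambda:\mathbb{T}\to\mathbb{R}$ be an $n$-cycle with values $\lambda_0,\dots,\lambda_{n-1}\in\mathbb{R}\setminus\{\pm\tfrac1h\}$, such that $0<|e_{\lambda}(nh)|\neq1$ and $0<|e_{-\lambda}(nh)|\neq1$. Define for $t\in\mathbb{T}$ $$p(t)=-\lambda(t+2h),\quad q(t)=-2\Delta_h\lambda(t+h)+\Delta_h\lambda(t+2h)-\lambda(t+2h)\lambda(t+3h),$$ $$r(t)=-\Delta_h^2\lambda(t)-\lambda(t)\Delta_h\lambda(t+2h)+\lambda(t)\lambda(t+2h)\lambda(t+3h).$$ Then the third-order equation $$\Delta_h^3y(t)+p(t)\Delta_h^2y(t)+q(t)\Delta_h y(t)+r(t)y(t)=0,\qquad t\in\mathbb{T},$$ has Hyers–Ulam stability on $\mathbb{T}$ with Hyers–Ulam stability constant $K=\bigl(K_0(\lambda)\bigr)^2K_0(-\lambda)$.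
   Context: Fix $h>0$ and let $\mathbb{T}=\{0,h,2h,3h,\dots\}$. For $x:\mathbb{T}\to\mathbb{R}$, $\Delta_h x(t)=\frac{x(t+h)-x(t)}{h}$ and $\Delta_h^2x=\Delta_h(\Delta_h x)$, $\Delta_h^3x=\Delta_h(\Delta_h^2 x)$. An $n$-cycle is a function $\mu:\mathbb{T}\to\mathbb{R}$ with $\mu(t)=\mu_k$ whenever $t/h\equiv k\pmod n$, $k\in\{0,\dots,n-1\}$, which has period $n$ and no smaller period. For such $\mu$ define the discrete exponential $e_\mu(t)=\prod_{k=0}^{t/h-1}(1+h\mu(kh))$ (empty product $=1$), so $e_\mu(nh)=\prod_{k=0}^{n-1}(1+h\mu_k)$. For $k\in\{0,\dots,n-1\}$ define $$S_k(\mu)=\sum_{j=1}^{n}\prod_{i=0}^{j-1}\frac{1}{|1+h\mu_{(k+i)\bmod n}|},$$ (e.g. $S_0(\mu)=\frac{1}{|1+h\mu_0|}+\frac{1}{|1+h\mu_0||1+h\mu_1|}+\dots+\frac{1}{|1+h\mu_0|\cdots|1+h\mu_{n-1}|}$), and, when $0<|e_\mu(nh)|\neq1$, $$K_0(\mu)=\frac{h|e_\mu(nh)|}{\bigl|1-|e_\mu(nh)|\bigr|}\max\{S_0(\mu),\dots,S_{n-1}(\mu)\}.$$ Here $-\lambda$ denotes the $n$-cycle with values $-\lambda_0,\dots,-\lambda_{n-1}$. Hyers–Ulam stability: an equation $\mathcal{L}[y](t)=f(t)$, $t\in\mathbb{T}$ (with $\mathcal{L}$ a linear difference operator) has Hyers–Ulam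 stability on $\mathbb{T}$ with Hyers–Ulam stability constant $K>0$ if for every $\varepsilon>0$ and every $\xi:\mathbb{T}\to\mathbb{R}$ with $|\mathcal{L}[\xi](t)-f(t)|\le\varepsilon$ for all $t\in\mathbb{T}$, there is a solution $y:\mathbb{T}\to\mathbb{R}$ of the equation with $|\xi(t)-y(t)|\le K\varepsilon$ for all $t\in\mathbb{T}$. The minimum Hyers–Ulam stability constant is the smallest such $K$. *)

theory Defs
  imports Main "HOL.Real"
begin

text \<open>Functions on the time scale T = {0, h, 2h, ...} are represented as
  sequences x :: nat \<Rightarrow> real, where x k stands for x(kh).\<close>

definition dlt :: "real \<Rightarrow> (nat \<Rightarrow> real) \<Rightarrow> nat \<Rightarrow> real" where
  "dlt h x k = (x (Suc k) - x k) / h"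

definition is_cycle :: "nat \<Rightarrow> (nat \<Rightarrow> real) \<Rightarrow> bool" where
  "is_cycle n \<mu> \<longleftrightarrow> 0 < n \<and> (\<forall>k. \<mu> (k + n) = \<mu> k)
     \<and> (\<forall>m. 0 < m \<and> m < n \<longrightarrow> \<not> (\<forall>k. \<mu> (k + m) = \<mu> k))"

definition dexp_cycle :: "real \<Rightarrow> nat \<Rightarrow> (nat \<Rightarrow> real) \<Rightarrow> real" where
  "dexp_cycle h n \<mu> = (\<Prod>k<n. 1 + h * \<mu> k)"

definition S_k :: "real \<Rightarrow> nat \<Rightarrow> (nat \<Rightarrow> real) \<Rightarrow> nat \<Rightarrow> real" where
  "S_k h n \<mu> k = (\<Sum>j=1..n. \<Prod>i<j. 1 / \<bar>1 + h * \<mu> ((k + i) mod n)\<bar>)"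

definition K0 :: "real \<Rightarrow> nat \<Rightarrow> (nat \<Rightarrow> real) \<Rightarrow> real" where
  "K0 h n \<mu> = h * \<bar>dexp_cycle h n \<mu>\<bar> / \<bar>1 - \<bar>dexp_cycle h n \<mu>\<bar>\<bar>
      * Max ((S_k h n \<mu>) ` {..<n})"

definition hyers_ulam_stable ::
  "((nat \<Rightarrow> real) \<Rightarrow> nat \<Rightarrow> real) \<Rightarrow> (nat \<Rightarrow> real) \<Rightarrow> real \<Rightarrow> bool" where
  "hyers_ulam_stable L f K \<longleftrightarrow> K > 0 \<and>
     (\<forall>\<epsilon>>0. \<forall>\<xi>. (\<forall>t. \<bar>L \<xi> t - f t\<bar> \<le> \<epsilon>) \<longrightarrow>
        (\<exists>y. (\<forall>t. L y t = f t) \<and> (\<forall>t. \<bar>\<xi> t - y t\<bar> \<le> K * \<epsilon>)))"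

end

(*
  The operator factors as (\<Delta> - \<lambda>(t+3)) (\<Delta> + \<lambda>(t+2)) (\<Delta> - \<lambda>(t)), and Hyers-Ulam
  constants multiply under composition, so it suffices to treat a first-order operator \<Delta> - \<mu>
  with an n-periodic coefficient. Writing the defect of an approximate solution as g, one needs a
  bounded solution d of d(t+1) = (1 + h\<mu>(t)) d(t) + h g(t). Products of the coefficients over one
  period all equal E = e_\<mu>(nh), so the relevant weights decay geometrically with ratio |E| (if
  |E| < 1, solve forward from d(0) = 0) or 1/|E| (if |E| > 1, solve backward from infinity); summing
  the geometric series gives the bound h |E| / |1 - |E|| max_k S_k(\<mu>) = K0(\<mu>). Finally K0 is
  invariant under shifting \<mu>, so the shifted coefficients \<lambda>(t+3) and -\<lambda>(t+2) give K0(\<lambda>)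
  and K0(-\<lambda>).
*)

theory Submission
  imports Defs Complex_Main
begin

definition dlt_minus :: "real \<Rightarrow> (nat \<Rightarrow> real) \<Rightarrow> (nat \<Rightarrow> real) \<Rightarrow> nat \<Rightarrow> real" where
  "dlt_minus h \<mu> x t = dlt h x t - \<mu> t * x t"

lemma third_order_operator_factorization:
  fixes h :: real and lam p q r y :: "nat \<Rightarrow> real"
  assumes "\<forall>t. p t = - lam (t + 2)"
    and "\<forall>t. q t = - 2 * dlt h lam (t + 1) + dlt h lam (t + 2) - lam (t + 2) * lam (t + 3)"
    and "\<forall>t. r t = - dlt h (dlt h lam) t - lam t * dlt h lam (t + 2)
                    + lam t * lam (t + 2) * lam (t + 3)"
  shows "dlt h (dlt h (dlt h y)) t + p t * dlt h (dlt h y) t + q t * dlt h y t + r t * y t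
     = dlt_minus h (\<lambda>k. lam (k + 3)) (dlt_minus h (\<lambda>k. - lam (k + 2)) (dlt_minus h lam y)) t"
proof -
  have p: "p t = - lam (t + 2)"
    and q: "q t = - 2 * dlt h lam (t + 1) + dlt h lam (t + 2) - lam (t + 2) * lam (t + 3)"
    and r: "r t = - dlt h (dlt h lam) t - lam t * dlt h lam (t + 2) + lam t * lam (t + 2) * lam (t + 3)"
    using assms by blast+
  show ?thesis unfolding p q r dlt_minus_def dlt_def
    by (simp add: numeral_eq_Suc divide_inverse algebra_simps)
qed

lemma hyers_ulam_stable_comp:
  assumes outer: "hyers_ulam_stable L1 f K1"
    and inner: "\<And>g. hyers_ulam_stable L2 g K2"
  shows "hyers_ulam_stable (\<lambda>y. L1 (L2 y)) f (K1 * K2)"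
  unfolding hyers_ulam_stable_def
proof (intro conjI allI impI)
  have "K1 > 0" "K2 > 0" using outer inner unfolding hyers_ulam_stable_def by auto
  then show "K1 * K2 > 0" by simp
  fix \<epsilon> :: real and \<xi>
  assume "\<epsilon> > 0" and approx: "\<forall>t. \<bar>L1 (L2 \<xi>) t - f t\<bar> \<le> \<epsilon>"
  obtain u where u: "\<forall>t. L1 u t = f t" and u_near: "\<forall>t. \<bar>L2 \<xi> t - u t\<bar> \<le> K1 * \<epsilon>"
    using outer \<open>\<epsilon> > 0\<close> approx unfolding hyers_ulam_stable_def by blast
  obtain y where y: "\<forall>t. L2 y t = u t" and y_near: "\<forall>t. \<bar>\<xi> t - y t\<bar> \<le> K2 * (K1 * \<epsilon>)"
  proof -
    have "K1 * \<epsilon> > 0" using \<open>K1 > 0\<close> \<open>\<epsilon> > 0\<close> by simp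
    then show thesis using inner[of u] u_near that unfolding hyers_ulam_stable_def by blast
  qed
  have "L2 y = u" using y by auto
  then show "\<exists>y. (\<forall>t. L1 (L2 y) t = f t) \<and> (\<forall>t. \<bar>\<xi> t - y t\<bar> \<le> K1 * K2 * \<epsilon>)"
    using u y_near by (auto simp: ac_simps)
qed

lemma periodic_mod:
  fixes f :: "nat \<Rightarrow> 'a" and n k :: nat
  assumes "\<forall>k. f (k + n) = f k"
  shows "f (k mod n) = f k"
proof -
  have "f (k mod n + n * j) = f (k mod n)" for j
  proof (induction j)
    case (Suc j)
    have "k mod n + n * Suc j = (k mod n + n * j) + n" by simp
    then show ?case using assms Suc by metis
  qed simp
  then show ?thesis by (metis mod_mult_div_eq)
qed

lemma periodic_image_lessThan:
  fixes f :: "nat \<Rightarrow> 'a" and n :: nat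
  assumes "0 < n" and "\<forall>k. f (k + n) = f k"
  shows "f ` {..<n} = range f"
  using assms periodic_mod[OF assms(2)] by (auto intro!: image_eqI[of _ f "_ mod n"])

lemma periodic_shift_image_lessThan:
  fixes f :: "nat \<Rightarrow> 'a" and n m :: nat
  assumes n: "0 < n" and per: "\<forall>k. f (k + n) = f k"
  shows "(\<lambda>k. f (k + m)) ` {..<n} = f ` {..<n}"
proof -
  have "range (\<lambda>k. f (k + m)) = range f"
  proof
    show "range f \<subseteq> range (\<lambda>k. f (k + m))"
    proof
      fix x assume "x \<in> range f"
      then obtain j where x: "x = f j" by blast
      have "m \<le> n * m" using n by simp
      then have "j + n * m = (j + n * m - m) + m" by arith
      moreover have "f (j + n * m) = f j"
        using periodic_mod[OF per, of "j + n * m"] periodic_mod[OF per, of j] by simp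
      ultimately show "x \<in> range (\<lambda>k. f (k + m))" using x by (metis rangeI)
    qed
  qed auto
  moreover have "\<forall>k. f (k + n + m) = f (k + m)" using per by (metis add.assoc add.commute)
  ultimately show ?thesis
    using periodic_image_lessThan[OF n per] periodic_image_lessThan[OF n, of "\<lambda>k. f (k + m)"]
    by simp
qed

(* With c = 1 + h\<mu>, wprod c t j is the quotient e_\<mu>((t+j)h) / e_\<mu>(th) of discrete exponentials. *)

definition wprod :: "(nat \<Rightarrow> 'a::comm_monoid_mult) \<Rightarrow> nat \<Rightarrow> nat \<Rightarrow> 'a" where
  "wprod c t j = (\<Prod>i<j. c (t + i))"

lemma wprod_0 [simp]: "wprod c t 0 = 1"
  by (simp add: wprod_def)

lemma wprod_Suc: "wprod c t (Suc j) = wprod c t j * c (t + j)"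
  by (simp add: wprod_def)

lemma wprod_add: "wprod c t (j + l) = wprod c t j * wprod c (t + j) l"
  by (induction l) (simp_all add: wprod_Suc add.assoc mult.assoc)

lemma wprod_Suc_left: "wprod c t (Suc j) = c t * wprod c (Suc t) j"
  using wprod_add[of c t 1 j] by (simp add: wprod_def)

lemma wprod_nonzero:
  fixes c :: "nat \<Rightarrow> 'a::semidom"
  shows "\<forall>k. c k \<noteq> 0 \<Longrightarrow> wprod c t j \<noteq> 0"
  by (simp add: wprod_def)

lemma wprod_shift_period:
  assumes "\<forall>k. c (k + n) = c k"
  shows "wprod c (t + n) j = wprod c t j"
  unfolding wprod_def using assms by (metis add.commute add.left_commute)

lemma wprod_full_period:
  assumes n: "0 < n" and per: "\<forall>k. c (k + n) = c k"
  shows "wprod c t n = wprod c 0 n"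
proof (induction t)
  case (Suc t)
  obtain j where j: "n = Suc j" using n by (cases n) auto
  have "wprod c (Suc t) n = wprod c (Suc t) j * c (t + n)"
    by (simp add: j wprod_Suc)
  also have "\<dots> = wprod c t n"
    using per by (simp add: j wprod_Suc_left mult.commute)
  finally show ?case using Suc by simp
qed simp


lemma sum_le_periodic_geometric:
  fixes a :: "nat \<Rightarrow> real"
  assumes rec: "\<And>m. m < M \<Longrightarrow> a (m + n) = \<rho> * a m" and nonneg: "\<And>m. 0 \<le> a m"
    and "0 \<le> \<rho>" and "\<rho> < 1"
  shows "(\<Sum>m<M. a m) \<le> (\<Sum>m<n. a m) / (1 - \<rho>)"
proof -
  have split: "(\<Sum>m<n + M. a m) = (\<Sum>m<n. a m) + (\<Sum>m<M. a (m + n))"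
    by (induction M) (simp_all add: ac_simps)
  have tail: "(\<Sum>m<M. a (m + n)) = \<rho> * (\<Sum>m<M. a m)"
    unfolding sum_distrib_left by (rule sum.cong) (auto simp: rec)
  have "(\<Sum>m<M. a m) \<le> (\<Sum>m<n + M. a m)" by (rule sum_mono2) (auto simp: nonneg)
  then have "(\<Sum>m<M. a m) * (1 - \<rho>) \<le> (\<Sum>m<n. a m)"
    using split tail by (simp add: algebra_simps)
  then show ?thesis using \<open>\<rho> < 1\<close> by (simp add: le_divide_eq)
qed

lemma sum_abs_wprod_contracting:
  fixes c :: "nat \<Rightarrow> real"
  assumes n: "0 < n" and per: "\<forall>k. c (k + n) = c k" and nz: "\<forall>k. c k \<noteq> 0"
    and contr: "\<bar>wprod c 0 n\<bar> < 1"
  shows "(\<Sum>s<t. \<bar>wprod c (s + 1) (t - s - 1)\<bar>)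
    \<le> \<bar>wprod c 0 n\<bar> * (\<Sum>m<n. 1 / \<bar>wprod c t (Suc m)\<bar>) / (1 - \<bar>wprod c 0 n\<bar>)"
proof -
  define E where "E = wprod c 0 n"
  have full: "wprod c t n = E" for t using wprod_full_period[OF n per] by (simp add: E_def)
  \<comment> \<open>the product of the m factors preceding t, shifted by a period so that t - m never truncates\<close>
  define a where "a m = \<bar>wprod c (t + n - m) m\<bar>" for m
  have reindex: "(\<Sum>s<t. \<bar>wprod c (s + 1) (t - s - 1)\<bar>) = (\<Sum>m<t. a m)"
  proof -
    have "(\<Sum>s<t. \<bar>wprod c (s + 1) (t - s - 1)\<bar>)
        = (\<Sum>m<t. \<bar>wprod c (t - Suc m + 1) (t - (t - Suc m) - 1)\<bar>)"
      by (rule sum.nat_diff_reindex[symmetric])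
    also have "\<dots> = (\<Sum>m<t. a m)"
    proof (rule sum.cong)
      fix m assume "m \<in> {..<t}"
      then have idx: "t - Suc m + 1 = t - m" "t - (t - Suc m) - 1 = m" "t + n - m = (t - m) + n"
        by auto
      show "\<bar>wprod c (t - Suc m + 1) (t - (t - Suc m) - 1)\<bar> = a m"
        unfolding a_def idx wprod_shift_period[OF per] ..
    qed simp
    finally show ?thesis .
  qed
  have period_sum: "(\<Sum>m<n. a m) = \<bar>E\<bar> * (\<Sum>m<n. 1 / \<bar>wprod c t (Suc m)\<bar>)"
  proof -
    have "(\<Sum>m<n. a m) = (\<Sum>m<n. a (n - Suc m))" by (rule sum.nat_diff_reindex[symmetric])
    also have "\<dots> = (\<Sum>m<n. \<bar>E\<bar> * (1 / \<bar>wprod c t (Suc m)\<bar>))"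
    proof (rule sum.cong)
      fix m assume "m \<in> {..<n}"
      then have shift: "t + n - (n - Suc m) = t + Suc m" and split: "Suc m + (n - Suc m) = n" by auto
      have "E = wprod c t (Suc m) * wprod c (t + Suc m) (n - Suc m)"
        using full[of t] wprod_add[of c t "Suc m" "n - Suc m"] split by simp
      then show "a (n - Suc m) = \<bar>E\<bar> * (1 / \<bar>wprod c t (Suc m)\<bar>)"
        using wprod_nonzero[OF nz, of t "Suc m"] by (simp add: a_def shift abs_mult)
    qed simp
    finally show ?thesis by (simp add: sum_distrib_left)
  qed
  have "(\<Sum>m<t. a m) \<le> (\<Sum>m<n. a m) / (1 - \<bar>E\<bar>)"
  proof (rule sum_le_periodic_geometric)
    fix m assume "m < t"
    then have idx: "t + n - (m + n) = t - m" "t + n - m = (t - m) + n" "t - m + m = t" by auto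
    have "wprod c (t - m) (m + n) = wprod c (t - m) m * wprod c (t - m + m) n"
      by (rule wprod_add)
    then have "wprod c (t - m) (m + n) = wprod c (t - m) m * E" using idx full by simp
    then show "a (m + n) = \<bar>E\<bar> * a m"
      unfolding a_def idx wprod_shift_period[OF per] by (simp add: abs_mult)
  qed (use contr in \<open>auto simp: a_def E_def\<close>)
  then show ?thesis using reindex period_sum by (simp add: E_def)
qed

lemma bounded_solution_contracting:
  fixes c g :: "nat \<Rightarrow> real"
  assumes n: "0 < n" and per: "\<forall>k. c (k + n) = c k" and nz: "\<forall>k. c k \<noteq> 0"
    and contr: "\<bar>wprod c 0 n\<bar> < 1"
    and g: "\<forall>t. \<bar>g t\<bar> \<le> \<delta>" and B: "\<forall>t. (\<Sum>m<n. 1 / \<bar>wprod c t (Suc m)\<bar>) \<le> B"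
  shows "\<exists>d. (\<forall>t. d (Suc t) = c t * d t + g t)
    \<and> (\<forall>t. \<bar>d t\<bar> \<le> \<bar>wprod c 0 n\<bar> / \<bar>1 - \<bar>wprod c 0 n\<bar>\<bar> * B * \<delta>)"
proof -
  define E where "E = wprod c 0 n"
  have \<delta>: "0 \<le> \<delta>" using g by (meson abs_ge_zero order_trans)
  define d where "d t = (\<Sum>s<t. g s * wprod c (s + 1) (t - s - 1))" for t
  have "d (Suc t) = c t * d t + g t" for t
  proof -
    have "d (Suc t) = (\<Sum>s<t. g s * wprod c (s + 1) (Suc t - s - 1)) + g t"
      by (simp add: d_def)
    also have "(\<Sum>s<t. g s * wprod c (s + 1) (Suc t - s - 1)) = c t * d t"
      unfolding d_def sum_distrib_left
    proof (rule sum.cong)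
      fix s assume "s \<in> {..<t}"
      then have "Suc t - s - 1 = Suc (t - s - 1)" and "s + 1 + (t - s - 1) = t" by auto
      then show "g s * wprod c (s + 1) (Suc t - s - 1) = c t * (g s * wprod c (s + 1) (t - s - 1))"
        by (simp add: wprod_Suc)
    qed simp
    finally show ?thesis .
  qed
  moreover have "\<bar>d t\<bar> \<le> \<bar>E\<bar> / \<bar>1 - \<bar>E\<bar>\<bar> * B * \<delta>" for t
  proof -
    have "\<bar>d t\<bar> \<le> (\<Sum>s<t. \<bar>g s * wprod c (s + 1) (t - s - 1)\<bar>)"
      unfolding d_def by (rule sum_abs)
    also have "\<dots> \<le> \<delta> * (\<Sum>s<t. \<bar>wprod c (s + 1) (t - s - 1)\<bar>)"
      unfolding sum_distrib_left using g by (intro sum_mono) (simp add: abs_mult mult_right_mono)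
    also have "\<dots> \<le> \<delta> * (\<bar>E\<bar> * (\<Sum>m<n. 1 / \<bar>wprod c t (Suc m)\<bar>) / (1 - \<bar>E\<bar>))"
      unfolding E_def by (rule mult_left_mono[OF sum_abs_wprod_contracting[OF n per nz contr] \<delta>])
    also have "\<dots> \<le> \<delta> * (\<bar>E\<bar> * B / (1 - \<bar>E\<bar>))"
      using B contr \<delta> by (intro mult_left_mono divide_right_mono) (auto simp: E_def)
    also have "\<dots> = \<bar>E\<bar> / \<bar>1 - \<bar>E\<bar>\<bar> * B * \<delta>" using contr by (simp add: E_def)
    finally show ?thesis .
  qed
  ultimately show ?thesis by (auto simp: E_def)
qed

lemma inverse_wprod_summable_expanding:
  fixes c :: "nat \<Rightarrow> real"
  assumes n: "0 < n" and per: "\<forall>k. c (k + n) = c k" and exp: "\<bar>wprod c 0 n\<bar> > 1"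
    and B: "\<forall>t. (\<Sum>m<n. 1 / \<bar>wprod c t (Suc m)\<bar>) \<le> B"
  shows "summable (\<lambda>m. 1 / \<bar>wprod c t (Suc m)\<bar>)"
    and "(\<Sum>m. 1 / \<bar>wprod c t (Suc m)\<bar>) \<le> B / (1 - 1 / \<bar>wprod c 0 n\<bar>)"
proof -
  have "(\<Sum>m<M. 1 / \<bar>wprod c t (Suc m)\<bar>)
      \<le> (\<Sum>m<n. 1 / \<bar>wprod c t (Suc m)\<bar>) / (1 - 1 / \<bar>wprod c 0 n\<bar>)" for M
  proof (rule sum_le_periodic_geometric)
    fix m
    have "wprod c t (Suc m + n) = wprod c t (Suc m) * wprod c (t + Suc m) n" by (rule wprod_add)
    also have "\<dots> = wprod c t (Suc m) * wprod c 0 n"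
      by (simp only: wprod_full_period[OF n per, of "t + Suc m"])
    finally show "1 / \<bar>wprod c t (Suc (m + n))\<bar> = 1 / \<bar>wprod c 0 n\<bar> * (1 / \<bar>wprod c t (Suc m)\<bar>)"
      by (simp add: abs_mult)
  qed (use exp in auto)
  also have "\<dots> \<le> B / (1 - 1 / \<bar>wprod c 0 n\<bar>)"
    using B exp by (intro divide_right_mono) auto
  finally have partial: "(\<Sum>m<M. 1 / \<bar>wprod c t (Suc m)\<bar>) \<le> B / (1 - 1 / \<bar>wprod c 0 n\<bar>)" for M .
  show "summable (\<lambda>m. 1 / \<bar>wprod c t (Suc m)\<bar>)"
    by (rule summableI_nonneg_bounded[OF _ partial]) simp
  then show "(\<Sum>m. 1 / \<bar>wprod c t (Suc m)\<bar>) \<le> B / (1 - 1 / \<bar>wprod c 0 n\<bar>)"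
    by (rule suminf_le_const[OF _ partial])
qed

lemma bounded_solution_expanding:
  fixes c g :: "nat \<Rightarrow> real"
  assumes n: "0 < n" and per: "\<forall>k. c (k + n) = c k" and nz: "\<forall>k. c k \<noteq> 0"
    and exp: "\<bar>wprod c 0 n\<bar> > 1"
    and g: "\<forall>t. \<bar>g t\<bar> \<le> \<delta>" and B: "\<forall>t. (\<Sum>m<n. 1 / \<bar>wprod c t (Suc m)\<bar>) \<le> B"
  shows "\<exists>d. (\<forall>t. d (Suc t) = c t * d t + g t)
    \<and> (\<forall>t. \<bar>d t\<bar> \<le> \<bar>wprod c 0 n\<bar> / \<bar>1 - \<bar>wprod c 0 n\<bar>\<bar> * B * \<delta>)"
proof -
  define E where "E = wprod c 0 n"
  define b where "b t m = 1 / \<bar>wprod c t (Suc m)\<bar>" for t m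
  define F where "F t m = g (t + m) / wprod c t (Suc m)" for t m
  have \<delta>: "0 \<le> \<delta>" using g by (meson abs_ge_zero order_trans)
  have b_summable: "summable (b t)" and b_bound: "suminf (b t) \<le> B / (1 - 1 / \<bar>E\<bar>)" for t
    using inverse_wprod_summable_expanding[OF n per exp B] by (simp_all add: b_def[abs_def] E_def)
  have F_le: "\<bar>F t m\<bar> \<le> \<delta> * b t m" for t m
    using g by (simp add: F_def b_def abs_divide divide_right_mono)
  have F_abs_summable: "summable (\<lambda>m. \<bar>F t m\<bar>)" for t
    by (rule summable_rabs_comparison_test[of _ "\<lambda>m. \<delta> * b t m"])
      (auto intro: F_le summable_mult b_summable)
  have F_summable: "summable (F t)" for t by (rule summable_rabs_cancel[OF F_abs_summable])
  \<comment> \<open>the recursion solved backwards from infinity\<close>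
  define d where "d t = - suminf (F t)" for t
  have "d (Suc t) = c t * d t + g t" for t
  proof -
    have F_Suc: "F t (Suc m) = F (Suc t) m / c t" for m
      using wprod_Suc_left[of c t "Suc m"] by (simp add: F_def)
    have "(\<Sum>m. F t (Suc m)) = suminf (F t) - F t 0" by (rule suminf_split_head[OF F_summable])
    moreover have "(\<Sum>m. F t (Suc m)) = suminf (F (Suc t)) / c t"
      unfolding F_Suc by (rule suminf_divide[OF F_summable])
    moreover have "F t 0 = g t / c t" by (simp add: F_def wprod_def)
    ultimately have "c t * suminf (F t) = g t + suminf (F (Suc t))"
      using nz by (simp add: field_simps)
    then show ?thesis by (simp add: d_def algebra_simps)
  qed
  moreover have "\<bar>d t\<bar> \<le> \<bar>E\<bar> / \<bar>1 - \<bar>E\<bar>\<bar> * B * \<delta>" for t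
  proof -
    have "\<bar>d t\<bar> \<le> (\<Sum>m. \<bar>F t m\<bar>)" by (simp add: d_def summable_rabs F_abs_summable)
    also have "\<dots> \<le> (\<Sum>m. \<delta> * b t m)"
      by (intro suminf_le F_abs_summable summable_mult b_summable F_le)
    also have "\<dots> = \<delta> * suminf (b t)" by (simp add: suminf_mult[OF b_summable])
    also have "\<dots> \<le> \<delta> * (B / (1 - 1 / \<bar>E\<bar>))"
      using \<delta> b_bound by (rule mult_left_mono[rotated])
    also have "\<dots> = \<bar>E\<bar> / \<bar>1 - \<bar>E\<bar>\<bar> * B * \<delta>" using exp by (simp add: E_def field_simps)
    finally show ?thesis .
  qed
  ultimately show ?thesis by (auto simp: E_def)
qed

lemma bounded_solution:
  fixes c g :: "nat \<Rightarrow> real"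
  assumes n: "0 < n" and per: "\<forall>k. c (k + n) = c k" and nz: "\<forall>k. c k \<noteq> 0"
    and not_one: "\<bar>wprod c 0 n\<bar> \<noteq> 1"
    and g: "\<forall>t. \<bar>g t\<bar> \<le> \<delta>" and B: "\<forall>t. (\<Sum>m<n. 1 / \<bar>wprod c t (Suc m)\<bar>) \<le> B"
  shows "\<exists>d. (\<forall>t. d (Suc t) = c t * d t + g t)
    \<and> (\<forall>t. \<bar>d t\<bar> \<le> \<bar>wprod c 0 n\<bar> / \<bar>1 - \<bar>wprod c 0 n\<bar>\<bar> * B * \<delta>)"
proof (cases "\<bar>wprod c 0 n\<bar> < 1")
  case True
  then show ?thesis using bounded_solution_contracting[OF n per nz _ g B] by blast
next
  case False
  then have "\<bar>wprod c 0 n\<bar> > 1" using not_one by simp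
  then show ?thesis using bounded_solution_expanding[OF n per nz _ g B] by blast
qed

lemma dexp_cycle_eq_wprod: "dexp_cycle h n \<mu> = wprod (\<lambda>k. 1 + h * \<mu> k) 0 n"
  by (simp add: dexp_cycle_def wprod_def)

lemma S_k_mod: "S_k h n \<mu> (t mod n) = S_k h n \<mu> t"
  by (simp add: S_k_def mod_add_left_eq)

lemma S_k_eq_window_sum:
  assumes per: "\<forall>k. \<mu> (k + n) = \<mu> k"
  shows "S_k h n \<mu> t = (\<Sum>m<n. 1 / \<bar>wprod (\<lambda>k. 1 + h * \<mu> k) t (Suc m)\<bar>)"
proof -
  have "S_k h n \<mu> t = (\<Sum>j=1..n. \<Prod>i<j. 1 / \<bar>1 + h * \<mu> (t + i)\<bar>)"
    unfolding S_k_def by (simp add: periodic_mod[OF per])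
  then show ?thesis
    by (simp add: wprod_def sum.atLeast1_atMost_eq abs_prod abs_mult prod_dividef)
qed

lemma S_k_shift:
  assumes per: "\<forall>k. \<mu> (k + n) = \<mu> k"
  shows "S_k h n (\<lambda>k. \<mu> (k + m)) t = S_k h n \<mu> (t + m)"
proof -
  have "\<forall>k. \<mu> (k + n + m) = \<mu> (k + m)" using per by (metis add.assoc add.commute)
  then show ?thesis
    using S_k_eq_window_sum[OF per] S_k_eq_window_sum[of "\<lambda>k. \<mu> (k + m)"]
    by (simp add: wprod_def ac_simps)
qed

lemma dexp_cycle_shift:
  assumes n: "0 < n" and per: "\<forall>k. \<mu> (k + n) = \<mu> k"
  shows "dexp_cycle h n (\<lambda>k. \<mu> (k + m)) = dexp_cycle h n \<mu>"
proof -
  have "dexp_cycle h n (\<lambda>k. \<mu> (k + m)) = wprod (\<lambda>k. 1 + h * \<mu> k) m n"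
    by (simp add: dexp_cycle_def wprod_def ac_simps)
  also have "\<dots> = wprod (\<lambda>k. 1 + h * \<mu> k) 0 n"
    using per by (intro wprod_full_period[OF n]) simp
  finally show ?thesis by (simp add: dexp_cycle_eq_wprod)
qed

lemma K0_shift:
  assumes n: "0 < n" and per: "\<forall>k. \<mu> (k + n) = \<mu> k"
  shows "K0 h n (\<lambda>k. \<mu> (k + m)) = K0 h n \<mu>"
proof -
  have "S_k h n (\<lambda>k. \<mu> (k + m)) ` {..<n} = S_k h n \<mu> ` {..<n}"
  proof -
    have "\<forall>k. S_k h n \<mu> (k + n) = S_k h n \<mu> k" using S_k_mod[of h n \<mu>] by (metis mod_add_self2)
    then show ?thesis
      using periodic_shift_image_lessThan[OF n] by (simp add: S_k_shift[OF per])
  qed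
  then show ?thesis by (simp add: K0_def dexp_cycle_shift[OF n per])
qed

lemma hyers_ulam_stable_dlt_minus:
  assumes h: "h > 0" and n: "0 < n" and per: "\<forall>k. \<mu> (k + n) = \<mu> k"
    and nz: "\<forall>k. 1 + h * \<mu> k \<noteq> 0" and not_one: "\<bar>dexp_cycle h n \<mu>\<bar> \<noteq> 1"
  shows "hyers_ulam_stable (dlt_minus h \<mu>) f (K0 h n \<mu>)"
  unfolding hyers_ulam_stable_def
proof (intro conjI allI impI)
  define c where "c k = 1 + h * \<mu> k" for k
  define E where "E = dexp_cycle h n \<mu>"
  define B where "B = Max (S_k h n \<mu> ` {..<n})"
  have E: "E = wprod c 0 n" by (simp add: E_def c_def[abs_def] dexp_cycle_eq_wprod)
  have per_c: "\<forall>k. c (k + n) = c k" using per by (simp add: c_def)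
  have nz_c: "\<forall>k. c k \<noteq> 0" using nz by (simp add: c_def)
  have window_le_B: "\<forall>t. (\<Sum>m<n. 1 / \<bar>wprod c t (Suc m)\<bar>) \<le> B"
  proof
    fix t
    have "(\<Sum>m<n. 1 / \<bar>wprod c t (Suc m)\<bar>) = S_k h n \<mu> (t mod n)"
      by (simp add: S_k_mod S_k_eq_window_sum[OF per] c_def[abs_def])
    also have "\<dots> \<le> B" unfolding B_def using n by (intro Max_ge) auto
    finally show "(\<Sum>m<n. 1 / \<bar>wprod c t (Suc m)\<bar>) \<le> B" .
  qed
  have K0: "K0 h n \<mu> = h * \<bar>E\<bar> / \<bar>1 - \<bar>E\<bar>\<bar> * B" by (simp add: K0_def E_def B_def)
  have "0 < (\<Sum>m<n. 1 / \<bar>wprod c 0 (Suc m)\<bar>)"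
    using n nz_c by (intro sum_pos) (auto simp: wprod_nonzero)
  then have "B > 0" using window_le_B by (meson less_le_trans)
  moreover have "E \<noteq> 0" using wprod_nonzero[OF nz_c] by (simp add: E)
  ultimately show "K0 h n \<mu> > 0" using h not_one by (simp add: K0 E_def)
  fix \<epsilon> :: real and \<xi>
  assume approx: "\<forall>t. \<bar>dlt_minus h \<mu> \<xi> t - f t\<bar> \<le> \<epsilon>"
  define g where "g t = h * (dlt_minus h \<mu> \<xi> t - f t)" for t
  have "\<forall>t. \<bar>g t\<bar> \<le> h * \<epsilon>" using approx h by (simp add: g_def abs_mult)
  moreover have "\<bar>wprod c 0 n\<bar> \<noteq> 1" using not_one by (simp add: E[symmetric] E_def)
  ultimately obtain d where d: "\<forall>t. d (Suc t) = c t * d t + g t"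
    and d_bound: "\<forall>t. \<bar>d t\<bar> \<le> \<bar>E\<bar> / \<bar>1 - \<bar>E\<bar>\<bar> * B * (h * \<epsilon>)"
    using bounded_solution[OF n per_c nz_c _ _ window_le_B] unfolding E by blast
  have "dlt_minus h \<mu> (\<lambda>t. \<xi> t - d t) t = f t" for t
  proof -
    have "d (Suc t) - d t = h * (\<mu> t * d t + dlt_minus h \<mu> \<xi> t - f t)"
      using d by (simp add: g_def c_def algebra_simps)
    then have "dlt h d t = \<mu> t * d t + dlt_minus h \<mu> \<xi> t - f t"
      using h by (simp add: dlt_def)
    moreover have "dlt h (\<lambda>t. \<xi> t - d t) t = dlt h \<xi> t - dlt h d t"
      by (simp add: dlt_def diff_divide_distrib)
    ultimately show ?thesis by (simp add: dlt_minus_def algebra_simps)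
  qed
  moreover have "\<bar>\<xi> t - (\<xi> t - d t)\<bar> \<le> K0 h n \<mu> * \<epsilon>" for t
    using d_bound by (simp add: K0 ac_simps)
  ultimately show "\<exists>y. (\<forall>t. dlt_minus h \<mu> y t = f t) \<and> (\<forall>t. \<bar>\<xi> t - y t\<bar> \<le> K0 h n \<mu> * \<epsilon>)"
    by blast
qed

lemma hyers_ulam_stable_dlt_minus_shift:
  assumes h: "h > 0" and n: "0 < n" and per: "\<forall>k. \<mu> (k + n) = \<mu> k"
    and nz: "\<forall>k. 1 + h * \<mu> k \<noteq> 0" and not_one: "\<bar>dexp_cycle h n \<mu>\<bar> \<noteq> 1"
  shows "hyers_ulam_stable (dlt_minus h (\<lambda>k. \<mu> (k + m))) f (K0 h n \<mu>)"
proof -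
  have "\<forall>k. \<mu> (k + n + m) = \<mu> (k + m)" using per by (metis add.assoc add.commute)
  then have "hyers_ulam_stable (dlt_minus h (\<lambda>k. \<mu> (k + m))) f (K0 h n (\<lambda>k. \<mu> (k + m)))"
    using nz not_one by (intro hyers_ulam_stable_dlt_minus[OF h n]) (simp_all add: dexp_cycle_shift[OF n per])
  then show ?thesis by (simp add: K0_shift[OF n per])
qed

theorem theorem5p3:
  fixes h :: real and n :: nat and lam p q r :: "nat \<Rightarrow> real"
  assumes hpos: "h > 0"
    and cyc: "is_cycle n lam"
    and vals: "\<forall>k<n. lam k \<noteq> 1 / h \<and> lam k \<noteq> - (1 / h)"
    and e1: "0 < \<bar>dexp_cycle h n lam\<bar>" "\<bar>dexp_cycle h n lam\<bar> \<noteq> 1"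
    and e2: "0 < \<bar>dexp_cycle h n (\<lambda>k. - lam k)\<bar>" "\<bar>dexp_cycle h n (\<lambda>k. - lam k)\<bar> \<noteq> 1"
    and p_def: "\<forall>t. p t = - lam (t + 2)"
    and q_def: "\<forall>t. q t = - 2 * dlt h lam (t + 1) + dlt h lam (t + 2) - lam (t + 2) * lam (t + 3)"
    and r_def: "\<forall>t. r t = - dlt h (dlt h lam) t - lam t * dlt h lam (t + 2)
                          + lam t * lam (t + 2) * lam (t + 3)"
  shows "hyers_ulam_stable
           (\<lambda>y t. dlt h (dlt h (dlt h y)) t + p t * dlt h (dlt h y) t + q t * dlt h y t + r t * y t)
           (\<lambda>t. 0)
           ((K0 h n lam)\<^sup>2 * K0 h n (\<lambda>k. - lam k))"
proof -
  from cyc have n: "0 < n" and per: "\<forall>k. lam (k + n) = lam k" unfolding is_cycle_def by auto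
  have "lam k \<noteq> 1 / h \<and> lam k \<noteq> - (1 / h)" for k
    using vals n periodic_mod[OF per, of k] by (metis mod_less_divisor)
  then have "h * lam k \<noteq> 1 \<and> h * lam k \<noteq> - 1" for k
    using hpos by (auto simp: field_simps)
  then have nz: "\<forall>k. 1 + h * lam k \<noteq> 0" "\<forall>k. 1 + h * - lam k \<noteq> 0"
    by (metis add.inverse_unique, simp add: add_eq_0_iff)
  have per_neg: "\<forall>k. - lam (k + n) = - lam k" using per by simp
  have D1: "hyers_ulam_stable (dlt_minus h lam) g (K0 h n lam)" for g
    by (rule hyers_ulam_stable_dlt_minus[OF hpos n per nz(1) e1(2)])
  have D2: "hyers_ulam_stable (dlt_minus h (\<lambda>k. - lam (k + 2))) g (K0 h n (\<lambda>k. - lam k))" for g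
    by (rule hyers_ulam_stable_dlt_minus_shift[where \<mu> = "\<lambda>k. - lam k" and m = 2,
          OF hpos n per_neg nz(2) e2(2)])
  have D3: "hyers_ulam_stable (dlt_minus h (\<lambda>k. lam (k + 3))) g (K0 h n lam)" for g
    by (rule hyers_ulam_stable_dlt_minus_shift[OF hpos n per nz(1) e1(2)])
  have factorization: "(\<lambda>y t. dlt h (dlt h (dlt h y)) t + p t * dlt h (dlt h y) t + q t * dlt h y t + r t * y t)
      = (\<lambda>y. dlt_minus h (\<lambda>k. lam (k + 3)) (dlt_minus h (\<lambda>k. - lam (k + 2)) (dlt_minus h lam y)))"
    by (intro ext third_order_operator_factorization[OF p_def q_def r_def])
  have K_eq: "(K0 h n lam)\<^sup>2 * K0 h n (\<lambda>k. - lam k) = K0 h n lam * K0 h n (\<lambda>k. - lam k) * K0 h n lam"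
    by (simp add: power2_eq_square mult.commute mult.left_commute)
  show ?thesis
    unfolding factorization K_eq
    by (rule hyers_ulam_stable_comp[OF hyers_ulam_stable_comp[OF D3 D2] D1])
qed

end
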